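(* Let $\mu$ be a Borel probability measure on $\mathbb{R}$ with mean $0$ and variance $1$, and let $\mu_n$ be as in the context. For any $\alpha,\beta>0$ there is $N$ such that for all $n\ge N$ the function $z\mapsto \sqrt n\,\varphi_\mu(\sqrt n z)$ is defined on all of $\Gamma_{\alpha,\beta}$ and agrees with $\varphi_{\mu_n}(z)$ at every $z\in\Gamma_{\alpha,\beta}$ where $\varphi_{\mu_n}$ is also defined; moreover $\sup_{z\in\Gamma_{\alpha,\beta}}\left|\sqrt n\,\varphi_\mu(\sqrt n z)-z^{-1}\right|\to 0$ as $n\to\infty$.
   Context: For a Borel probability measure $\nu$ on $\mathbb{R}$, the Cauchy transform is $G_\nu(z)=\int_{\mathbb{R}}\frac{d\nu(t)}{z-t}$ for $z\in\mathbb{C}^+=\{\Im z>0\}$, and $F_\nu(z)=1/G_\nu(z)$. Where $F_\nu$ has an analytic right inverse $F_\nu^{-1}$, define $\varphi_\nu(z)=F_\nu^{-1}(z)-z$; for $\nu$ with mean $0$ and variance $1$, $\varphi_\nu$ is defined on $\{\Im z>2\}$. For $\alpha,\beta>0$, $\Gamma_{\alpha,\beta}=\{z\in\mathbb{C}^+:\Im z>\alpha|\Re z|,\ |z|>\beta\}$. $\boxplus$ denotes free additive convolution. Given $\mu$, $\mu_n$ denotes the distribution of $n^{-1/2}(X_1+\dots+X_n)$ where $X_1,\dots,X_n$ are freely independent with common distribution $\mu$; equivalently $\mu_n(B)=\mu^{\boxplus n}(\sqrt n\,B)$. *)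

theory Defs
  imports "HOL-Probability.Probability"
begin

definition upper_half :: "complex set" where
  "upper_half = {z. Im z > 0}"

definition cauchy_transform :: "real measure \<Rightarrow> complex \<Rightarrow> complex" where
  "cauchy_transform \<nu> z = (\<integral>t. 1 / (z - complex_of_real t) \<partial>\<nu>)"

definition F_transform :: "real measure \<Rightarrow> complex \<Rightarrow> complex" where
  "F_transform \<nu> z = 1 / cauchy_transform \<nu> z"

definition trunc_cone :: "real \<Rightarrow> real \<Rightarrow> complex set" where
  "trunc_cone \<alpha> \<beta> = {z. Im z > 0 \<and> Im z > \<alpha> * \<bar>Re z\<bar> \<and> cmod z > \<beta>}"

definition admissible_dom :: "complex set \<Rightarrow> bool" where
  "admissible_dom U \<longleftrightarrow> open U \<and> convex U \<and> U \<subseteq> upper_half \<and>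
     (\<exists>y0. \<forall>y\<ge>y0. \<i> * complex_of_real y \<in> U)"

definition right_inverse_branch ::
    "real measure \<Rightarrow> complex set \<Rightarrow> (complex \<Rightarrow> complex) \<Rightarrow> bool" where
  "right_inverse_branch \<nu> U h \<longleftrightarrow> admissible_dom U \<and> h holomorphic_on U \<and>
     h ` U \<subseteq> upper_half \<and> (\<forall>w\<in>U. F_transform \<nu> (h w) = w) \<and>
     ((\<lambda>y. h (\<i> * complex_of_real y) / (\<i> * complex_of_real y)) \<longlongrightarrow> 1) at_top"

definition phi_dom :: "real measure \<Rightarrow> complex set" where
  "phi_dom \<nu> = \<Union>{U. \<exists>h. right_inverse_branch \<nu> U h}"

text \<open>Voiculescu transform phi(w) = F^{-1}(w) - w (meaningful for w in phi_dom).\<close>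
definition voiculescu :: "real measure \<Rightarrow> complex \<Rightarrow> complex" where
  "voiculescu \<nu> w = (SOME c. \<exists>U h. right_inverse_branch \<nu> U h \<and> w \<in> U \<and> c = h w - w)"

definition borel_prob :: "real measure \<Rightarrow> bool" where
  "borel_prob M \<longleftrightarrow> prob_space M \<and> sets M = sets borel"

text \<open>rho is the free additive convolution of mu and nu (Bercovici--Voiculescu
  characterisation: phi_rho = phi_mu + phi_nu on a common truncated cone).\<close>
definition is_free_conv :: "real measure \<Rightarrow> real measure \<Rightarrow> real measure \<Rightarrow> bool" where
  "is_free_conv \<mu> \<nu> \<rho> \<longleftrightarrow> borel_prob \<mu> \<and> borel_prob \<nu> \<and> borel_prob \<rho> \<and>
     (\<exists>\<alpha> \<beta>. \<alpha> > 0 \<and> \<beta> > 0 \<and>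
        trunc_cone \<alpha> \<beta> \<subseteq> phi_dom \<mu> \<inter> phi_dom \<nu> \<inter> phi_dom \<rho> \<and>
        (\<forall>z\<in>trunc_cone \<alpha> \<beta>. voiculescu \<rho> z = voiculescu \<mu> z + voiculescu \<nu> z))"

definition free_powers :: "real measure \<Rightarrow> (nat \<Rightarrow> real measure) \<Rightarrow> bool" where
  "free_powers \<mu> P \<longleftrightarrow> P 1 = \<mu> \<and> (\<forall>k\<ge>1. is_free_conv (P k) \<mu> (P (Suc k)))"

text \<open>mu_n(B) = P n (sqrt n * B), i.e. the image of P n under x -> x / sqrt n.\<close>
definition normalized_power :: "(nat \<Rightarrow> real measure) \<Rightarrow> nat \<Rightarrow> real measure" where
  "normalized_power P n = distr (P n) borel (\<lambda>x. x / sqrt (real n))"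

end

theory Submission
  imports Defs "HOL-Complex_Analysis.Complex_Analysis"
begin

text \<open>Since \<open>\<mu>\<close> has mean 0 and variance 1, \<open>G(z) = 1/z + 1/z\<^sup>3 + o(\<bar>z\<bar>\<^sup>-\<^sup>3)\<close> in
  cones, so \<open>F(z) = z - 1/z + o(1/\<bar>z\<bar>)\<close> there and \<open>\<bar>F z - z\<bar> \<le> 2 / Im z\<close> on
  \<open>Im z \<ge> 2\<close>. A holomorphic map that is that close to the identity is, high enough in the
  half plane, the identity plus a contraction; hence it has a holomorphic inverse there, and by
  analytic continuation from the imaginary axis every normalised branch of \<open>F\<^sup>-\<^sup>1\<close> agrees
  with it. Consequently \<open>\<phi>\<^sub>\<mu>(w) = 1/w + o(1/\<bar>w\<bar>)\<close> in cones. Free convolution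
  powers satisfy \<open>\<phi>\<^sub>P\<^sub>n = n \<phi>\<^sub>\<mu>\<close> on a cone and the dilation by \<open>\<surd>n\<close> gives
  \<open>F\<^sub>\<mu>\<^sub>n(z) = F\<^sub>P\<^sub>n(\<surd>n z) / \<surd>n\<close>, so \<open>z \<mapsto> z + \<surd>n \<phi>\<^sub>\<mu>(\<surd>n z)\<close> is a
  right inverse of \<open>F\<^sub>\<mu>\<^sub>n\<close> on a cone, hence agrees with every branch of
  \<open>F\<^sub>\<mu>\<^sub>n\<^sup>-\<^sup>1\<close>, and
  \<open>\<surd>n \<phi>\<^sub>\<mu>(\<surd>n z) - 1/z = \<surd>n (\<phi>\<^sub>\<mu>(w) - 1/w)\<close> with \<open>w = \<surd>n z\<close> is uniformly
  small on \<open>\<Gamma>\<^sub>\<alpha>\<^sub>,\<^sub>\<beta>\<close>.\<close>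

lemma norm_inverse_sub_of_real_le:
  assumes "0 < Im z"
  shows "cmod (1 / (z - of_real t)) \<le> 1 / Im z"
proof -
  have "Im z \<le> cmod (z - of_real t)"
    using abs_Im_le_cmod[of "z - of_real t"] by simp
  then show ?thesis
    using assms by (simp add: norm_divide divide_simps)
qed

lemma abs_div_norm_sub_of_real_le:
  fixes z :: complex and t k :: real
  assumes k: "0 < k" and cone: "k * cmod z \<le> Im z" and "z \<noteq> 0"
  shows "\<bar>t\<bar> / cmod (z - of_real t) \<le> 2 / k * min 1 (\<bar>t\<bar> / cmod z)"
proof -
  have z: "0 < cmod z" using \<open>z \<noteq> 0\<close> by simp
  have "k * cmod z \<le> cmod z"
    using cone abs_Im_le_cmod[of z] by linarith
  then have "k \<le> 1" using z by simp
  have "Im z \<le> cmod (z - of_real t)"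
    using abs_Im_le_cmod[of "z - of_real t"] by simp
  then have dist_ge: "k * cmod z \<le> cmod (z - of_real t)"
    using cone by linarith
  then have near: "\<bar>t\<bar> / cmod (z - of_real t) \<le> 1 / k * (\<bar>t\<bar> / cmod z)"
    using k z by (simp add: frac_le)
  have "\<bar>t\<bar> / cmod (z - of_real t) \<le> 2 / k"
  proof (cases "2 * cmod z \<le> \<bar>t\<bar>")
    case True
    have "\<bar>t\<bar> - cmod z \<le> cmod (z - of_real t)"
      using norm_triangle_ineq2[of "of_real t" z] by (simp add: norm_minus_commute)
    then have "\<bar>t\<bar> \<le> 2 * cmod (z - of_real t)" using True by linarith
    then have "\<bar>t\<bar> / cmod (z - of_real t) \<le> 2"
      using True z by (simp add: divide_simps)
    also have "\<dots> \<le> 2 / k" using k \<open>k \<le> 1\<close> by (simp add: divide_simps)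
    finally show ?thesis .
  next
    case False
    then have "1 / k * (\<bar>t\<bar> / cmod z) \<le> 1 / k * 2"
      using k z by (intro mult_left_mono) (auto simp: divide_simps)
    with near show ?thesis by simp
  qed
  moreover have "1 / k * (\<bar>t\<bar> / cmod z) \<le> 2 / k * (\<bar>t\<bar> / cmod z)"
    using k z by (intro mult_right_mono) (auto simp: divide_simps)
  ultimately show ?thesis
    using near by (auto simp: min_def ac_simps)
qed

lemma cone_Im_ge_norm:
  assumes "0 < a" and "a * \<bar>Re w\<bar> < Im w"
  shows "a / (1 + a) * cmod w \<le> Im w"
proof -
  have "0 \<le> a * \<bar>Re w\<bar>" using assms(1) by simp
  then have "\<bar>Im w\<bar> = Im w" using assms(2) by simp
  have "a * cmod w \<le> a * \<bar>Re w\<bar> + a * \<bar>Im w\<bar>"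
    using cmod_le[of w] assms(1) by (simp add: distrib_left[symmetric])
  also have "\<dots> \<le> Im w + a * Im w"
    using assms(2) \<open>\<bar>Im w\<bar> = Im w\<close> by simp
  finally have "a * cmod w \<le> (1 + a) * Im w" by (simp add: algebra_simps)
  then show ?thesis
    using assms(1) by (simp add: field_simps)
qed

lemma trunc_cone_Im_gt:
  assumes "w \<in> trunc_cone a b" and "0 < a"
  shows "b * a / (1 + a) < Im w"
proof -
  have w: "a * \<bar>Re w\<bar> < Im w" "b < cmod w"
    using assms(1) by (auto simp: trunc_cone_def)
  have "b * (a / (1 + a)) < cmod w * (a / (1 + a))"
    using w(2) assms(2) by (intro mult_strict_right_mono) auto
  also have "\<dots> \<le> Im w"
    using cone_Im_ge_norm[OF assms(2) w(1)] by (simp add: mult.commute)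
  finally show ?thesis by simp
qed

lemma trunc_cone_antimono:
  assumes "0 \<le> a" "a \<le> a'" "b \<le> b'"
  shows "trunc_cone a' b' \<subseteq> trunc_cone a b"
proof
  fix x assume "x \<in> trunc_cone a' b'"
  moreover have "a * \<bar>Re x\<bar> \<le> a' * \<bar>Re x\<bar>"
    using assms by (intro mult_right_mono) auto
  ultimately show "x \<in> trunc_cone a b"
    using assms by (auto simp: trunc_cone_def)
qed

lemma trunc_cone_scale:
  assumes "z \<in> trunc_cone a b" and "0 \<le> a" and "1 \<le> s"
  shows "of_real s * z \<in> trunc_cone a b"
proof -
  have z: "0 < Im z" "a * \<bar>Re z\<bar> < Im z" "b < cmod z"
    using assms(1) by (auto simp: trunc_cone_def)
  have "a * \<bar>Re z\<bar> * s < Im z * s" "b < cmod z * s"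
    using z assms(3) mult_left_mono[of 1 s "cmod z"] by auto
  then show ?thesis
    using z assms(3) by (auto simp: trunc_cone_def norm_mult abs_mult algebra_simps)
qed

lemma eventually_sqrt_gt: "\<forall>\<^sub>F n in sequentially. T < sqrt (real n)"
proof -
  have "filterlim (\<lambda>n. sqrt (real n)) at_top sequentially" by real_asymp
  then show ?thesis by (simp add: filterlim_at_top_dense)
qed

lemma tendsto_SUP_ereal_0:
  assumes "A \<noteq> {}" and nonneg: "\<And>n z. z \<in> A \<Longrightarrow> 0 \<le> f n z"
    and small: "\<And>r. 0 < r \<Longrightarrow> \<forall>\<^sub>F n in sequentially. \<forall>z\<in>A. f n z \<le> r"
  shows "(\<lambda>n. SUP z\<in>A. ereal (f n z)) \<longlonglongrightarrow> 0"
proof (rule order_tendstoI)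
  fix y :: ereal assume y: "y < 0"
  obtain z0 where z0: "z0 \<in> A" using \<open>A \<noteq> {}\<close> by blast
  have "0 \<le> (SUP z\<in>A. ereal (f n z))" for n
    using nonneg[OF z0] by (intro SUP_upper2[OF z0]) simp
  then have "\<forall>n. y < (SUP z\<in>A. ereal (f n z))"
    using y by (blast intro: order.strict_trans2)
  then show "\<forall>\<^sub>F n in sequentially. y < (SUP z\<in>A. ereal (f n z))"
    by (rule always_eventually)
next
  fix y :: ereal assume "0 < y"
  then obtain r where r: "0 < ereal r" "ereal r < y" using ereal_dense2 by blast
  then have "\<forall>\<^sub>F n in sequentially. \<forall>z\<in>A. f n z \<le> r" by (intro small) simp
  then show "\<forall>\<^sub>F n in sequentially. (SUP z\<in>A. ereal (f n z)) < y"
  proof eventually_elim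
    case (elim n)
    then have "(SUP z\<in>A. ereal (f n z)) \<le> ereal r" by (intro SUP_least) auto
    then show ?case using r(2) by (rule order.strict_trans1)
  qed
qed

section \<open>Holomorphic maps close to the identity on a half plane\<close>

locale near_identity =
  fixes f :: "complex \<Rightarrow> complex" and c M :: real
  assumes holomorphic: "f holomorphic_on {z. c < Im z}"
    and c_nonneg: "0 \<le> c" and M_pos: "0 < M"
    and near: "\<And>z. c < Im z \<Longrightarrow> cmod (f z - z) \<le> M / Im z"
begin

lemma norm_deriv_le:
  assumes z: "2 * c + 4 * M + 4 < Im z"
  shows "cmod (deriv (\<lambda>z. f z - z) z) \<le> 1 / 2"
proof -
  define g where "g = (\<lambda>z. f z - z)"
  define r where "r = (Im z - c) / 2"
  have r: "0 < r" "Im z / 4 \<le> r" and Im_z: "0 < Im z"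
    using z c_nonneg M_pos by (auto simp: r_def)
  have Im_ge: "Im z - r \<le> Im x" if "cmod (z - x) \<le> r" for x
    using that abs_Im_le_cmod[of "z - x"] by simp
  have cball: "cball z r \<subseteq> {z. c < Im z}"
    using Im_ge z c_nonneg M_pos by (force simp: r_def dist_norm field_simps)
  have "g holomorphic_on {z. c < Im z}"
    unfolding g_def by (intro holomorphic_intros holomorphic)
  then have hol: "g holomorphic_on cball z r"
    using cball by (rule holomorphic_on_subset)
  have "cmod ((deriv ^^ 1) g z) \<le> fact 1 * (2 * M / Im z) / r ^ 1"
  proof (rule Cauchy_inequality)
    show "g holomorphic_on ball z r" using hol by (rule holomorphic_on_subset) auto
    show "continuous_on (cball z r) g" using hol by (rule holomorphic_on_imp_continuous_on)
    fix x assume x: "cmod (z - x) = r"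
    then have "Im z - r \<le> Im x" using Im_ge by simp
    moreover have "2 * r = Im z - c" by (simp add: r_def)
    ultimately have Im_x: "Im z + c \<le> 2 * Im x" by linarith
    have "Im z / 2 \<le> Im x" "c < Im x"
      using Im_x z c_nonneg M_pos by auto
    have "cmod (g x) \<le> M / Im x"
      unfolding g_def using \<open>c < Im x\<close> by (rule near)
    also have "\<dots> \<le> M / (Im z / 2)"
      using \<open>Im z / 2 \<le> Im x\<close> M_pos Im_z by (intro divide_left_mono) auto
    finally show "cmod (g x) \<le> 2 * M / Im z" by (simp add: ac_simps)
  qed (use r in auto)
  then have "cmod (deriv g z) \<le> 2 * M / Im z / r" by simp
  also have "\<dots> \<le> 2 * M / Im z / (Im z / 4)"
    using r Im_z M_pos by (intro divide_left_mono) auto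
  also have "\<dots> = 8 * M / (Im z * Im z)" by (simp add: field_simps)
  also have "\<dots> \<le> 1 / 2"
  proof -
    have "(4 * M + 4) * (4 * M + 4) \<le> Im z * Im z"
      using z c_nonneg M_pos by (intro mult_mono) auto
    moreover have "16 * M \<le> (4 * M + 4) * (4 * M + 4)"
      using M_pos by (simp add: algebra_simps)
    ultimately show ?thesis using Im_z by (simp add: divide_simps)
  qed
  finally show ?thesis unfolding g_def .
qed

lemma norm_diff_le:
  assumes "2 * c + 4 * M + 4 < Im z1" and "2 * c + 4 * M + 4 < Im z2"
  shows "cmod ((f z1 - z1) - (f z2 - z2)) \<le> cmod (z1 - z2) / 2"
proof -
  define S where "S = {z. 2 * c + 4 * M + 4 < Im z}"
  have "S \<subseteq> {z. c < Im z}"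
    using c_nonneg M_pos by (auto simp: S_def)
  then have hol: "(\<lambda>z. f z - z) holomorphic_on S"
    by (intro holomorphic_intros holomorphic_on_subset[OF holomorphic])
  have "cmod ((f z1 - z1) - (f z2 - z2)) \<le> 1 / 2 * cmod (z1 - z2)"
  proof (rule field_differentiable_bound[where S = S and f' = "deriv (\<lambda>z. f z - z)"])
    show "convex S" unfolding S_def by (rule convex_halfspace_Im_gt)
    show "((\<lambda>z. f z - z) has_field_derivative deriv (\<lambda>z. f z - z) z) (at z within S)"
      if "z \<in> S" for z
      using holomorphic_derivI[OF hol _ that] by (simp add: S_def open_halfspace_Im_gt)
    show "cmod (deriv (\<lambda>z. f z - z) z) \<le> 1 / 2" if "z \<in> S" for z
      using norm_deriv_le that by (simp add: S_def)
  qed (use assms in \<open>auto simp: S_def\<close>)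
  then show ?thesis by simp
qed

lemma inj: "inj_on f {z. 2 * c + 4 * M + 4 < Im z}"
proof (rule inj_onI)
  fix z1 z2 assume "z1 \<in> {z. 2 * c + 4 * M + 4 < Im z}" "z2 \<in> {z. 2 * c + 4 * M + 4 < Im z}"
    and "f z1 = f z2"
  then have "cmod (z1 - z2) \<le> cmod (z1 - z2) / 2"
    using norm_diff_le[of z1 z2] by (simp add: norm_minus_commute)
  then show "z1 = z2" by simp
qed

lemma preimage_exists:
  assumes v: "2 * c + 4 * M + 5 < Im v"
  obtains \<zeta> where "cmod (\<zeta> - v) \<le> 1" and "f \<zeta> = v"
proof -
  define T where "T = (\<lambda>\<zeta>. v - (f \<zeta> - \<zeta>))"
  have Im_gt: "2 * c + 4 * M + 4 < Im \<zeta>" if "\<zeta> \<in> cball v 1" for \<zeta>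
    using that abs_Im_le_cmod[of "v - \<zeta>"] v by (simp add: dist_norm)
  have "\<exists>!\<zeta> \<in> cball v 1. T \<zeta> = \<zeta>"
  proof (rule Banach_fix[where c = "1 / 2"])
    show "Topological_Spaces.complete (cball v 1)" by (rule compact_imp_complete[OF compact_cball])
    show "T ` cball v 1 \<subseteq> cball v 1"
    proof clarify
      fix \<zeta> assume \<zeta>: "\<zeta> \<in> cball v 1"
      have "cmod (f \<zeta> - \<zeta>) \<le> M / Im \<zeta>"
        using Im_gt[OF \<zeta>] c_nonneg M_pos by (intro near) linarith
      also have "\<dots> \<le> M / (4 * M + 4)"
        using Im_gt[OF \<zeta>] c_nonneg M_pos by (intro divide_left_mono) auto
      also have "\<dots> \<le> 1" using M_pos by (simp add: divide_simps)
      finally show "T \<zeta> \<in> cball v 1" by (simp add: T_def dist_norm)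
    qed
    show "dist (T x) (T y) \<le> 1 / 2 * dist x y" if "x \<in> cball v 1" "y \<in> cball v 1" for x y
    proof -
      have "T x - T y = - ((f x - x) - (f y - y))" by (simp add: T_def)
      then have "dist (T x) (T y) = cmod ((f x - x) - (f y - y))"
        by (simp add: dist_norm) (metis norm_minus_commute)
      then show ?thesis
        using norm_diff_le[OF Im_gt[OF that(1)] Im_gt[OF that(2)]] by (simp add: dist_norm)
    qed
  qed auto
  then obtain \<zeta> where "\<zeta> \<in> cball v 1" "T \<zeta> = \<zeta>" by blast
  then show ?thesis
    by (intro that[of \<zeta>]) (auto simp: T_def dist_norm norm_minus_commute)
qed

definition local_inverse :: "complex \<Rightarrow> complex" where
  "local_inverse = the_inv_into {z. 2 * c + 4 * M + 4 < Im z} f"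

lemma local_inverse:
  assumes "2 * c + 4 * M + 5 < Im v"
  shows "f (local_inverse v) = v" and "cmod (local_inverse v - v) \<le> 1"
    and "2 * c + 4 * M + 4 < Im (local_inverse v)"
proof -
  obtain \<zeta> where \<zeta>: "cmod (\<zeta> - v) \<le> 1" "f \<zeta> = v"
    using preimage_exists[OF assms] .
  have "2 * c + 4 * M + 4 < Im \<zeta>"
    using \<zeta>(1) abs_Im_le_cmod[of "\<zeta> - v"] assms by simp
  moreover from this have "local_inverse v = \<zeta>"
    unfolding local_inverse_def \<zeta>(2)[symmetric] by (intro the_inv_into_f_f inj) auto
  ultimately show "f (local_inverse v) = v" "cmod (local_inverse v - v) \<le> 1"
    "2 * c + 4 * M + 4 < Im (local_inverse v)"
    using \<zeta> by auto
qed

lemma local_inverse_holomorphic: "local_inverse holomorphic_on {v. 2 * c + 4 * M + 5 < Im v}"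
proof -
  define S where "S = {z. 2 * c + 4 * M + 4 < Im z}"
  have "f holomorphic_on S"
    using c_nonneg M_pos by (intro holomorphic_on_subset[OF holomorphic]) (auto simp: S_def)
  then obtain g where g: "g holomorphic_on f ` S" "\<And>z. z \<in> S \<Longrightarrow> g (f z) = z"
    using holomorphic_has_inverse[of f S] inj open_halfspace_Im_gt by (metis S_def)
  have "local_inverse v = g v" if "v \<in> f ` S" for v
    using that g(2) inj by (auto simp: local_inverse_def S_def the_inv_into_f_f)
  then have "local_inverse holomorphic_on f ` S"
    using g(1) by (metis holomorphic_transform)
  moreover have "{v. 2 * c + 4 * M + 5 < Im v} \<subseteq> f ` S"
    using local_inverse(1,3) by (force simp: S_def)
  ultimately show ?thesis by (rule holomorphic_on_subset)
qed

lemma near_identity_local_inverse: "near_identity local_inverse (2 * c + 4 * M + 5) (2 * M)"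
proof
  show "local_inverse holomorphic_on {v. 2 * c + 4 * M + 5 < Im v}"
    by (rule local_inverse_holomorphic)
  fix v assume v: "2 * c + 4 * M + 5 < Im v"
  define \<zeta> where "\<zeta> = local_inverse v"
  have \<zeta>: "f \<zeta> = v" "cmod (\<zeta> - v) \<le> 1" "2 * c + 4 * M + 4 < Im \<zeta>"
    using local_inverse[OF v] by (auto simp: \<zeta>_def)
  have "Im v / 2 \<le> Im \<zeta>"
    using \<zeta>(2) abs_Im_le_cmod[of "\<zeta> - v"] v c_nonneg M_pos by simp
  have "cmod (\<zeta> - v) = cmod (f \<zeta> - \<zeta>)"
    using \<zeta>(1) by (simp add: norm_minus_commute)
  also have "\<dots> \<le> M / Im \<zeta>"
    using \<zeta>(3) c_nonneg M_pos by (intro near) linarith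
  also have "\<dots> \<le> M / (Im v / 2)"
    using \<open>Im v / 2 \<le> Im \<zeta>\<close> v c_nonneg M_pos by (intro divide_left_mono) auto
  finally show "cmod (local_inverse v - v) \<le> 2 * M / Im v"
    by (simp add: \<zeta>_def ac_simps)
qed (use c_nonneg M_pos in auto)

end

lemma near_identity_cong:
  assumes "near_identity f c M" and "\<And>z. c < Im z \<Longrightarrow> f z = g z"
  shows "near_identity g c M"
proof -
  interpret near_identity f c M by fact
  show ?thesis
    using holomorphic_transform[OF holomorphic] assms(2) near c_nonneg M_pos
    by unfold_locales auto
qed

lemma near_identity_rescale:
  assumes "near_identity (\<lambda>w. w + \<phi> w) c M" and s: "0 < s"
  shows "near_identity (\<lambda>z. z + of_real s * \<phi> (of_real s * z)) (c / s) M"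
proof -
  interpret near_identity "\<lambda>w. w + \<phi> w" c M by (fact assms(1))
  have Im_scale: "c < Im (of_real s * z) \<longleftrightarrow> c / s < Im z" for z
    using s by (simp add: field_simps)
  show ?thesis
  proof
    have "(\<lambda>w. w + \<phi> w - w) holomorphic_on {w. c < Im w}"
      by (intro holomorphic_intros holomorphic)
    then have hol: "\<phi> holomorphic_on {w. c < Im w}" by simp
    have "(\<phi> \<circ> (\<lambda>z. of_real s * z)) holomorphic_on {z. c / s < Im z}"
      by (rule holomorphic_on_compose_gen[OF _ hol])
        (use s in \<open>auto intro: holomorphic_intros simp: field_simps\<close>)
    then show "(\<lambda>z. z + of_real s * \<phi> (of_real s * z)) holomorphic_on {z. c / s < Im z}"
      by (auto intro!: holomorphic_intros simp: o_def)
    fix z assume "c / s < Im z"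
    then have "cmod (\<phi> (of_real s * z)) \<le> M / (s * Im z)"
      using near[of "of_real s * z"] Im_scale by simp
    then have "s * cmod (\<phi> (of_real s * z)) \<le> s * (M / (s * Im z))"
      using s by (intro mult_left_mono) auto
    then show "cmod (z + of_real s * \<phi> (of_real s * z) - z) \<le> M / Im z"
      using s by (simp add: norm_mult)
  qed (use c_nonneg M_pos s in auto)
qed

lemma holomorphic_eq_from_imaginary_ray:
  fixes f g :: "complex \<Rightarrow> complex"
  assumes "f holomorphic_on V" "g holomorphic_on V" "open V" "convex V" "w \<in> V"
    and ray: "\<And>y. Y \<le> y \<Longrightarrow> \<i> * of_real y \<in> V \<and> f (\<i> * of_real y) = g (\<i> * of_real y)"
  shows "f w = g w"
proof -
  define R where "R = (\<lambda>y. \<i> * of_real y) ` {Y<..}"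
  define \<xi> where "\<xi> = \<i> * of_real Y"
  have "f w - g w = 0"
  proof (rule analytic_continuation[of "\<lambda>z. f z - g z" V R \<xi>])
    show "(\<lambda>z. f z - g z) holomorphic_on V" by (intro holomorphic_intros assms)
    show "connected V" using \<open>convex V\<close> by (rule convex_connected)
    show "R \<subseteq> V" "\<xi> \<in> V" using ray by (auto simp: R_def \<xi>_def)
    show "\<xi> islimpt R"
    proof (rule islimpt_approachable[THEN iffD2], intro allI impI)
      fix e :: real assume e: "0 < e"
      show "\<exists>x\<in>R. x \<noteq> \<xi> \<and> dist x \<xi> < e"
      proof (intro bexI conjI)
        show "\<i> * of_real (Y + e / 2) \<in> R"
          using e unfolding R_def by (intro image_eqI[where x = "Y + e / 2"]) auto
        have "dist (\<i> * of_real (Y + e / 2)) \<xi> = cmod (\<i> * of_real (e / 2))"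
          unfolding \<xi>_def dist_norm by (simp add: algebra_simps)
        then show "dist (\<i> * of_real (Y + e / 2)) \<xi> < e" "\<i> * of_real (Y + e / 2) \<noteq> \<xi>"
          using e by (auto simp: dist_norm norm_mult)
      qed
    qed
  qed (use assms ray in \<open>auto simp: R_def\<close>)
  then show ?thesis by simp
qed

section \<open>Branches of the inverse of the reciprocal Cauchy transform\<close>

lemma voiculescu_branch:
  assumes "w \<in> phi_dom \<nu>"
  obtains U h where "right_inverse_branch \<nu> U h" "w \<in> U" "voiculescu \<nu> w = h w - w"
proof -
  have "\<exists>c U h. right_inverse_branch \<nu> U h \<and> w \<in> U \<and> c = h w - w"
    using assms unfolding phi_dom_def by blast
  from someI_ex[OF this] show ?thesis
    using that unfolding voiculescu_def by blast
qed

lemma F_transform_add_voiculescu: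
  assumes "w \<in> phi_dom \<nu>"
  shows "F_transform \<nu> (w + voiculescu \<nu> w) = w"
proof -
  obtain U h where "right_inverse_branch \<nu> U h" "w \<in> U" "voiculescu \<nu> w = h w - w"
    using voiculescu_branch[OF assms] .
  then show ?thesis by (simp add: right_inverse_branch_def)
qed

lemma right_inverse_branch_ray:
  assumes branch: "right_inverse_branch \<nu> U h" and d: "0 < d"
  obtains Y where
    "\<And>y. Y \<le> y \<Longrightarrow> \<i> * of_real y \<in> U \<and> cmod (h (\<i> * of_real y) - \<i> * of_real y) \<le> d * y"
proof -
  obtain y0 where ray: "\<And>y. y0 \<le> y \<Longrightarrow> \<i> * of_real y \<in> U"
    using branch by (auto simp: right_inverse_branch_def admissible_dom_def)
  have "((\<lambda>y. h (\<i> * of_real y) / (\<i> * of_real y)) \<longlongrightarrow> 1) at_top"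
    using branch by (simp add: right_inverse_branch_def)
  then have "\<forall>\<^sub>F y in at_top. dist (h (\<i> * of_real y) / (\<i> * of_real y)) 1 < d"
    using d by (rule tendstoD)
  then obtain Y1 where Y1: "\<And>y. Y1 \<le> y \<Longrightarrow> cmod (h (\<i> * of_real y) / (\<i> * of_real y) - 1) < d"
    by (auto simp: eventually_at_top_linorder dist_norm)
  have "\<i> * of_real y \<in> U \<and> cmod (h (\<i> * of_real y) - \<i> * of_real y) \<le> d * y"
    if y: "max (max Y1 y0) 1 \<le> y" for y
  proof -
    have "h (\<i> * of_real y) - \<i> * of_real y
        = (\<i> * of_real y) * (h (\<i> * of_real y) / (\<i> * of_real y) - 1)"
      using y by (simp add: field_simps)
    then have "cmod (h (\<i> * of_real y) - \<i> * of_real y)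
        = y * cmod (h (\<i> * of_real y) / (\<i> * of_real y) - 1)"
      using y by (simp add: norm_mult)
    also have "\<dots> \<le> y * d"
      using Y1[of y] y by (intro mult_left_mono) auto
    finally show ?thesis
      using ray y by (simp add: mult.commute)
  qed
  then show ?thesis using that by blast
qed

text \<open>Far up the imaginary axis the branch value \<open>v = h (\<i> y)\<close> is close to \<open>\<i> y\<close>, so its
  \<open>K\<close>-preimage lies in the cone where \<open>K\<close> is a right inverse of \<open>F\<close>; hence that preimage is
  \<open>F v = \<i> y\<close>, and \<open>h\<close> and \<open>K\<close> agree along the ray.\<close>
lemma right_inverse_branch_eq_near_identity:
  assumes branch: "right_inverse_branch \<nu> U h" and K: "near_identity K c M"
    and a: "0 < a" and b: "0 < b"
    and F_K: "\<And>\<zeta>. \<zeta> \<in> trunc_cone a b \<Longrightarrow> F_transform \<nu> (K \<zeta>) = \<zeta>"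
    and w: "w \<in> U" "c < Im w"
  shows "h w = K w"
proof -
  interpret K: near_identity K c M by (fact K)
  have U: "open U" "convex U" and h: "h holomorphic_on U"
    and F_h: "\<And>w. w \<in> U \<Longrightarrow> F_transform \<nu> (h w) = w"
    using branch by (auto simp: right_inverse_branch_def admissible_dom_def)
  define d where "d = 1 / (4 * (1 + a))"
  have d: "0 < d" "d \<le> 1 / 4" and ad: "\<And>y. a * (d * y) = y / 4 - d * y"
    using a by (auto simp: d_def field_simps)
  obtain Y where Y: "\<And>y. Y \<le> y \<Longrightarrow>
      \<i> * of_real y \<in> U \<and> cmod (h (\<i> * of_real y) - \<i> * of_real y) \<le> d * y"
    using right_inverse_branch_ray[OF branch d(1)] by blast
  define T where "T = max Y (24 + 4 * a + 4 * b + 8 * c + 16 * M)"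
  show ?thesis
  proof (rule holomorphic_eq_from_imaginary_ray[where f = h and g = K and V = "U \<inter> {z. c < Im z}"
        and Y = T])
    show "h holomorphic_on U \<inter> {z. c < Im z}" using h by (rule holomorphic_on_subset) auto
    show "K holomorphic_on U \<inter> {z. c < Im z}"
      using K.holomorphic by (rule holomorphic_on_subset) auto
    show "open (U \<inter> {z. c < Im z})" using U by (intro open_Int open_halfspace_Im_gt)
    show "convex (U \<inter> {z. c < Im z})" using U by (intro convex_Int convex_halfspace_Im_gt)
    show "w \<in> U \<inter> {z. c < Im z}" using w by simp
    fix y assume y: "T \<le> y"
    have big: "24 + 4 * a + 4 * b + 8 * c + 16 * M \<le> y" "Y \<le> y"
      using y by (auto simp: T_def)
    define v where "v = h (\<i> * of_real y)"
    have yU: "\<i> * of_real y \<in> U" and close: "cmod (v - \<i> * of_real y) \<le> d * y"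
      using Y[OF big(2)] by (auto simp: v_def)
    have "0 \<le> y" using big K.c_nonneg K.M_pos a b by linarith
    then have "d * y \<le> y / 4" using mult_right_mono[OF d(2)] by simp
    moreover have "y - d * y \<le> Im v" "\<bar>Re v\<bar> \<le> d * y"
      using close abs_Im_le_cmod[of "v - \<i> * of_real y"] abs_Re_le_cmod[of "v - \<i> * of_real y"]
      by auto
    ultimately have v: "3 / 4 * y \<le> Im v" "\<bar>Re v\<bar> \<le> d * y" by auto
    then have "2 * c + 4 * M + 5 < Im v" using big K.c_nonneg K.M_pos a b by linarith
    then obtain \<zeta> where \<zeta>: "cmod (\<zeta> - v) \<le> 1" "K \<zeta> = v"
      using K.preimage_exists by blast
    have "Im v - 1 \<le> Im \<zeta>" "\<bar>Re \<zeta>\<bar> \<le> \<bar>Re v\<bar> + 1"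
      using \<zeta>(1) abs_Im_le_cmod[of "\<zeta> - v"] abs_Re_le_cmod[of "\<zeta> - v"] by auto
    moreover have "a * \<bar>Re \<zeta>\<bar> \<le> a * (d * y + 1)"
      using calculation(2) v(2) a by (intro mult_left_mono) auto
    ultimately have "a * \<bar>Re \<zeta>\<bar> < Im \<zeta>" "b < Im \<zeta>"
      using v ad[of y] big a b K.c_nonneg K.M_pos by (auto simp: algebra_simps)
    moreover have "Im \<zeta> \<le> cmod \<zeta>" using abs_Im_le_cmod[of \<zeta>] by simp
    ultimately have "\<zeta> \<in> trunc_cone a b"
      using a b by (auto simp: trunc_cone_def)
    then have "\<zeta> = F_transform \<nu> (K \<zeta>)" by (simp add: F_K)
    also have "\<dots> = \<i> * of_real y" using \<zeta>(2) F_h[OF yU] by (simp add: v_def)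
    finally have "\<zeta> = \<i> * of_real y" .
    then show "\<i> * of_real y \<in> U \<inter> {z. c < Im z} \<and> h (\<i> * of_real y) = K (\<i> * of_real y)"
      using yU big \<zeta>(2) a b K.c_nonneg K.M_pos by (auto simp: v_def)
  qed
qed

lemma voiculescu_eq_near_identity:
  assumes "z \<in> phi_dom \<nu>" and "near_identity (\<lambda>w. w + \<phi> w) c M" and "0 < a" "0 < b"
    and "\<And>\<zeta>. \<zeta> \<in> trunc_cone a b \<Longrightarrow> F_transform \<nu> (\<zeta> + \<phi> \<zeta>) = \<zeta>" and "c < Im z"
  shows "voiculescu \<nu> z = \<phi> z"
proof -
  obtain U h where "right_inverse_branch \<nu> U h" "z \<in> U" "voiculescu \<nu> z = h z - z"
    using voiculescu_branch[OF assms(1)] .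
  then show ?thesis
    using right_inverse_branch_eq_near_identity[of \<nu> U h "\<lambda>w. w + \<phi> w"] assms by auto
qed

lemma cauchy_transform_distr_divide:
  assumes "sets M = sets borel" and "0 < s"
  shows "cauchy_transform (distr M borel (\<lambda>x. x / s)) z
    = of_real s * cauchy_transform M (of_real s * z)"
proof -
  have meas: "(\<lambda>x. x / s) \<in> measurable M borel"
    by (subst measurable_cong_sets[OF assms(1) refl]) measurable
  have "cauchy_transform (distr M borel (\<lambda>x. x / s)) z = (\<integral>x. 1 / (z - of_real (x / s)) \<partial>M)"
    unfolding cauchy_transform_def by (rule integral_distr[OF meas]) measurable
  also have "\<dots> = (\<integral>x. of_real s * (1 / (of_real s * z - of_real x)) \<partial>M)"
    using assms(2) by (intro Bochner_Integration.integral_cong) (auto simp: field_simps)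
  also have "\<dots> = of_real s * cauchy_transform M (of_real s * z)"
    unfolding cauchy_transform_def by (rule integral_mult_right_zero)
  finally show ?thesis .
qed

lemma F_transform_distr_divide:
  assumes "sets M = sets borel" and "0 < s"
  shows "F_transform (distr M borel (\<lambda>x. x / s)) z = F_transform M (of_real s * z) / of_real s"
  unfolding F_transform_def cauchy_transform_distr_divide[OF assms] by simp

lemma free_powers_sets:
  assumes "free_powers \<mu> P" and "sets \<mu> = sets borel" and "1 \<le> n"
  shows "sets (P n) = sets borel"
proof (cases "n = 1")
  case False
  then obtain k where "n = Suc k" and "1 \<le> k" using assms(3) by (cases n) auto
  then have "is_free_conv (P k) \<mu> (P n)"
    using assms(1) by (simp add: free_powers_def)
  then show ?thesis by (simp add: is_free_conv_def borel_prob_def)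
qed (use assms in \<open>simp add: free_powers_def\<close>)

lemma free_powers_voiculescu:
  assumes P: "free_powers \<mu> P" and a0: "0 < a0" and b0: "0 < b0"
    and dom: "trunc_cone a0 b0 \<subseteq> phi_dom \<mu>" and "1 \<le> n"
  shows "\<exists>a b. 0 < a \<and> 0 < b \<and> trunc_cone a b \<subseteq> phi_dom (P n)
    \<and> (\<forall>w\<in>trunc_cone a b. voiculescu (P n) w = of_nat n * voiculescu \<mu> w)"
  using \<open>1 \<le> n\<close>
proof (induction n rule: dec_induct)
  case base
  then show ?case using a0 b0 dom P by (auto simp: free_powers_def)
next
  case (step k)
  obtain a b where ab: "0 < a" "0 < b" "trunc_cone a b \<subseteq> phi_dom (P k)"
    "\<And>w. w \<in> trunc_cone a b \<Longrightarrow> voiculescu (P k) w = of_nat k * voiculescu \<mu> w"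
    using step.IH by blast
  have "is_free_conv (P k) \<mu> (P (Suc k))"
    using P step.hyps by (simp add: free_powers_def)
  then obtain a' b' where ab': "0 < a'" "0 < b'"
    "trunc_cone a' b' \<subseteq> phi_dom (P k) \<inter> phi_dom \<mu> \<inter> phi_dom (P (Suc k))"
    "\<And>z. z \<in> trunc_cone a' b' \<Longrightarrow> voiculescu (P (Suc k)) z = voiculescu (P k) z + voiculescu \<mu> z"
    unfolding is_free_conv_def by blast
  define A B where "A = max a a'" and "B = max b b'"
  have sub: "trunc_cone A B \<subseteq> trunc_cone a b \<inter> trunc_cone a' b'"
    using trunc_cone_antimono[of a A b B] trunc_cone_antimono[of a' A b' B] ab ab'
    by (auto simp: A_def B_def)
  have "0 < A" "0 < B" using ab ab' by (auto simp: A_def B_def)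
  moreover have "trunc_cone A B \<subseteq> phi_dom (P (Suc k))" using sub ab'(3) by blast
  moreover have "\<forall>w\<in>trunc_cone A B. voiculescu (P (Suc k)) w = of_nat (Suc k) * voiculescu \<mu> w"
    using sub ab(4) ab'(4) by (auto simp: algebra_simps subset_iff)
  ultimately show ?case by blast
qed

section \<open>Cauchy transforms of a standardized measure\<close>

definition cauchy_moment :: "real measure \<Rightarrow> nat \<Rightarrow> complex \<Rightarrow> complex" where
  "cauchy_moment M k z = (\<integral>t. of_real (t ^ k) / (z - of_real t) \<partial>M)"

lemma cauchy_transform_eq_moment_0: "cauchy_transform M z = cauchy_moment M 0 z"
  by (simp add: cauchy_transform_def cauchy_moment_def)

lemma cauchy_moment_Suc:
  assumes "integrable M (\<lambda>t. t ^ k)"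
    and "integrable M (\<lambda>t. of_real (t ^ Suc k) / (z - of_real t))" and "0 < Im z"
  shows "cauchy_moment M k z = (of_real (\<integral>t. t ^ k \<partial>M) + cauchy_moment M (Suc k) z) / z"
proof -
  have "z \<noteq> 0" "\<And>t. z - of_real t \<noteq> 0"
    using assms(3) by (auto simp: complex_eq_iff)
  then have "cauchy_moment M k z
      = (\<integral>t. (of_real (t ^ k) + of_real (t ^ Suc k) / (z - of_real t)) / z \<partial>M)"
    unfolding cauchy_moment_def
    by (intro Bochner_Integration.integral_cong) (auto simp: field_simps)
  also have "\<dots> = (\<integral>t. of_real (t ^ k) + of_real (t ^ Suc k) / (z - of_real t) \<partial>M) / z"
    by (rule integral_divide_zero)
  also have "\<dots> = (of_real (\<integral>t. t ^ k \<partial>M) + cauchy_moment M (Suc k) z) / z"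
    unfolding Bochner_Integration.integral_add[OF integrable_of_real[OF assms(1)] assms(2)]
    by (simp add: cauchy_moment_def del: of_real_power)
  finally show ?thesis .
qed

lemma abs_power_le_cubic:
  fixes t :: real
  assumes "k \<le> 3"
  shows "\<bar>t\<bar> ^ k \<le> (1 + t\<^sup>2) * (1 + \<bar>t\<bar>)"
proof -
  have "\<bar>t\<bar> ^ k \<le> 1 + \<bar>t\<bar> ^ 3"
  proof (cases "\<bar>t\<bar> \<le> 1")
    case True
    then have "\<bar>t\<bar> ^ k \<le> 1" by (simp add: power_le_one)
    then show ?thesis using zero_le_power[of "\<bar>t\<bar>" 3] by linarith
  next
    case False
    then have "\<bar>t\<bar> ^ k \<le> \<bar>t\<bar> ^ 3" using assms by (intro power_increasing) auto
    then show ?thesis by linarith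
  qed
  also have "\<dots> \<le> 1 + \<bar>t\<bar> + t\<^sup>2 + \<bar>t\<bar> ^ 3" by simp
  also have "\<dots> = (1 + t\<^sup>2) * (1 + \<bar>t\<bar>)"
    by (simp add: algebra_simps power2_eq_square power3_eq_cube)
  finally show ?thesis .
qed

lemma norm_cauchy_integrand_le:
  assumes "k \<le> 3" and z: "0 < Im z"
  shows "cmod (of_real (t ^ k) / (z - of_real t)) \<le> (1 + t\<^sup>2) * ((1 + cmod z) / Im z + 1)"
proof -
  have dist: "Im z \<le> cmod (z - of_real t)"
    using abs_Im_le_cmod[of "z - of_real t"] by simp
  have "\<bar>t\<bar> \<le> cmod z + cmod (z - of_real t)"
    using norm_triangle_ineq4[of z "z - of_real t"] by simp
  then have "(1 + \<bar>t\<bar>) / cmod (z - of_real t) \<le> (1 + cmod z) / cmod (z - of_real t) + 1"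
    using dist z by (simp add: divide_simps)
  also have "\<dots> \<le> (1 + cmod z) / Im z + 1"
    using dist z by (simp add: frac_le)
  finally have ratio: "(1 + \<bar>t\<bar>) / cmod (z - of_real t) \<le> (1 + cmod z) / Im z + 1" .
  have "cmod (of_real (t ^ k) / (z - of_real t)) = \<bar>t\<bar> ^ k / cmod (z - of_real t)"
    by (simp add: norm_divide norm_power)
  also have "\<dots> \<le> (1 + t\<^sup>2) * (1 + \<bar>t\<bar>) / cmod (z - of_real t)"
    using abs_power_le_cubic[OF assms(1)] dist z by (intro divide_right_mono) auto
  also have "\<dots> = (1 + t\<^sup>2) * ((1 + \<bar>t\<bar>) / cmod (z - of_real t))" by simp
  also have "\<dots> \<le> (1 + t\<^sup>2) * ((1 + cmod z) / Im z + 1)"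
    using ratio by (intro mult_left_mono) auto
  finally show ?thesis .
qed

text \<open>\<open>moment_modulus \<mu> r \<rightarrow> 0\<close> takes the place of a finite third moment, which
  \<open>\<mu>\<close> need not have.\<close>
definition moment_modulus :: "real measure \<Rightarrow> real \<Rightarrow> real" where
  "moment_modulus M r = (\<integral>t. t\<^sup>2 * min 1 (\<bar>t\<bar> / r) \<partial>M)"

locale standardized_measure =
  fixes \<mu> :: "real measure"
  assumes prob: "prob_space \<mu>" and sets_\<mu>: "sets \<mu> = sets borel"
    and integrable_square: "integrable \<mu> (\<lambda>x. x\<^sup>2)"
    and mean_zero: "(\<integral>x. x \<partial>\<mu>) = 0"
    and variance_one: "(\<integral>x. x\<^sup>2 \<partial>\<mu>) = 1"
begin

sublocale prob_space \<mu> by (fact prob)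

lemma borel_measurable_\<mu>: "f \<in> borel_measurable borel \<Longrightarrow> f \<in> borel_measurable \<mu>"
  using measurable_cong_sets[of \<mu> borel borel borel] sets_\<mu> by simp

lemma integrable_bounded:
  fixes f :: "real \<Rightarrow> complex"
  assumes "f \<in> borel_measurable borel" and "\<And>x. cmod (f x) \<le> B"
  shows "integrable \<mu> f"
  using assms by (intro integrable_const_bound[where B = B]) (auto intro: borel_measurable_\<mu>)

lemma norm_integral_le_bound:
  fixes f :: "real \<Rightarrow> complex"
  assumes "integrable \<mu> f" and "\<And>x. cmod (f x) \<le> B"
  shows "cmod (\<integral>x. f x \<partial>\<mu>) \<le> B"
proof -
  have "cmod (\<integral>x. f x \<partial>\<mu>) \<le> (\<integral>x. cmod (f x) \<partial>\<mu>)" by (rule integral_norm_bound)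
  also have "\<dots> \<le> (\<integral>x. B \<partial>\<mu>)" using assms by (intro integral_mono integrable_norm) auto
  finally show ?thesis by (simp add: prob_space)
qed

lemma integrable_power:
  assumes "k \<le> 2"
  shows "integrable \<mu> (\<lambda>t. t ^ k)"
proof -
  have bound: "norm (t ^ k) \<le> norm (1 + t\<^sup>2)" for t :: real
  proof (cases "\<bar>t\<bar> \<le> 1")
    case True
    then have "\<bar>t\<bar> ^ k \<le> 1" by (simp add: power_le_one)
    then have "norm (t ^ k) \<le> 1" by (simp add: power_abs)
    also have "1 \<le> norm (1 + t\<^sup>2)" by simp
    finally show ?thesis .
  next
    case False
    then have "\<bar>t\<bar> ^ k \<le> \<bar>t\<bar> ^ 2" using assms by (intro power_increasing) auto
    then show ?thesis by (simp add: power_abs)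
  qed
  have "integrable \<mu> (\<lambda>t. 1 + t\<^sup>2)" using integrable_square by simp
  moreover have "(\<lambda>t. t ^ k) \<in> borel_measurable \<mu>" by (rule borel_measurable_\<mu>) simp
  moreover have "AE t in \<mu>. norm (t ^ k) \<le> norm (1 + t\<^sup>2)" using bound by simp
  ultimately show ?thesis by (rule Bochner_Integration.integrable_bound)
qed

lemma integrable_cauchy_integrand:
  assumes "k \<le> 3" and "0 < Im z"
  shows "integrable \<mu> (\<lambda>t. of_real (t ^ k) / (z - of_real t))"
proof (rule Bochner_Integration.integrable_bound)
  show "integrable \<mu> (\<lambda>t. (1 + t\<^sup>2) * ((1 + cmod z) / Im z + 1))"
    using integrable_square by simp
  show "(\<lambda>t. of_real (t ^ k) / (z - of_real t)) \<in> borel_measurable \<mu>"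
    by (rule borel_measurable_\<mu>) measurable
  show "AE t in \<mu>. cmod (of_real (t ^ k) / (z - of_real t))
      \<le> norm ((1 + t\<^sup>2) * ((1 + cmod z) / Im z + 1))"
    using norm_cauchy_integrand_le[OF assms] assms(2)
    by (intro AE_I2) (auto intro: order_trans[OF _ abs_ge_self])
qed

lemma cauchy_transform_expansion:
  assumes "0 < Im z"
  shows "cauchy_transform \<mu> z = (1 + cauchy_moment \<mu> 2 z / z) / z"
proof -
  have "cauchy_moment \<mu> 1 z = cauchy_moment \<mu> 2 z / z"
    using cauchy_moment_Suc[of \<mu> 1 z] integrable_power[of 1] integrable_cauchy_integrand[of 2 z]
      assms mean_zero by (simp add: numeral_2_eq_2)
  moreover have "cauchy_moment \<mu> 0 z = (1 + cauchy_moment \<mu> 1 z) / z"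
    using cauchy_moment_Suc[of \<mu> 0 z] integrable_cauchy_integrand[of 1 z] assms
    by (simp add: prob_space)
  ultimately show ?thesis by (simp add: cauchy_transform_eq_moment_0)
qed

lemma cauchy_moment_2_expansion:
  assumes "0 < Im z"
  shows "cauchy_moment \<mu> 2 z = (1 + cauchy_moment \<mu> 3 z) / z"
  using cauchy_moment_Suc[of \<mu> 2 z] integrable_power[of 2] integrable_cauchy_integrand[of 3 z]
    assms variance_one by (simp add: numeral_3_eq_3)

lemma norm_cauchy_moment_2_le:
  assumes z: "0 < Im z"
  shows "cmod (cauchy_moment \<mu> 2 z) \<le> 1 / Im z"
proof -
  have bound: "cmod (of_real (t\<^sup>2) / (z - of_real t)) \<le> t\<^sup>2 / Im z" for t
  proof -
    have "cmod (of_real (t\<^sup>2) / (z - of_real t)) = t\<^sup>2 * cmod (1 / (z - of_real t))"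
      by (simp add: norm_divide norm_power)
    also have "\<dots> \<le> t\<^sup>2 * (1 / Im z)"
      by (intro mult_left_mono norm_inverse_sub_of_real_le z) auto
    finally show ?thesis by simp
  qed
  have "cmod (cauchy_moment \<mu> 2 z) \<le> (\<integral>t. cmod (of_real (t\<^sup>2) / (z - of_real t)) \<partial>\<mu>)"
    unfolding cauchy_moment_def by (rule integral_norm_bound)
  also have "\<dots> \<le> (\<integral>t. t\<^sup>2 / Im z \<partial>\<mu>)"
    using integrable_cauchy_integrand[of 2 z] integrable_square z bound
    by (intro integral_mono integrable_norm) auto
  also have "\<dots> = 1 / Im z" using variance_one by simp
  finally show ?thesis .
qed

lemma moment_modulus_tendsto_0: "(moment_modulus \<mu> \<longlongrightarrow> 0) at_top"
proof -
  have "((\<lambda>r. \<integral>t. t\<^sup>2 * min 1 (\<bar>t\<bar> / r) \<partial>\<mu>) \<longlongrightarrow> (\<integral>t. 0 \<partial>\<mu>)) at_top"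
  proof (rule integral_dominated_convergence_at_top[where w = "\<lambda>t. t\<^sup>2"])
    show "(\<lambda>t. t\<^sup>2 * min 1 (\<bar>t\<bar> / r)) \<in> borel_measurable \<mu>" for r
      by (rule borel_measurable_\<mu>) measurable
    show "AE t in \<mu>. ((\<lambda>r. t\<^sup>2 * min 1 (\<bar>t\<bar> / r)) \<longlongrightarrow> 0) at_top"
    proof (intro AE_I2)
      fix t :: real
      have "((\<lambda>r. \<bar>t\<bar> / r) \<longlongrightarrow> 0) at_top" by real_asymp
      then have "((\<lambda>r. t\<^sup>2 * min 1 (\<bar>t\<bar> / r)) \<longlongrightarrow> t\<^sup>2 * min 1 0) at_top"
        by (intro tendsto_intros)
      then show "((\<lambda>r. t\<^sup>2 * min 1 (\<bar>t\<bar> / r)) \<longlongrightarrow> 0) at_top" by simp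
    qed
    show "\<forall>\<^sub>F r in at_top. AE t in \<mu>. norm (t\<^sup>2 * min 1 (\<bar>t\<bar> / r)) \<le> t\<^sup>2"
      unfolding eventually_at_top_linorder
      by (intro exI[of _ 1] allI impI AE_I2) (auto simp: abs_mult intro!: mult_left_le)
  qed (use integrable_square in auto)
  then show ?thesis by (simp add: moment_modulus_def[abs_def])
qed

lemma norm_cauchy_moment_3_le:
  assumes k: "0 < k" and cone: "k * cmod z \<le> Im z" and z: "0 < Im z"
  shows "cmod (cauchy_moment \<mu> 3 z) \<le> 2 / k * moment_modulus \<mu> (cmod z)"
proof -
  have "z \<noteq> 0" using z by auto
  have bound: "cmod (of_real (t ^ 3) / (z - of_real t)) \<le> 2 / k * (t\<^sup>2 * min 1 (\<bar>t\<bar> / cmod z))"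
    for t
  proof -
    have "cmod (of_real (t ^ 3) / (z - of_real t)) = \<bar>t\<bar> ^ 3 / cmod (z - of_real t)"
      by (simp add: norm_divide norm_power)
    also have "\<dots> = t\<^sup>2 * (\<bar>t\<bar> / cmod (z - of_real t))"
      by (simp add: power3_eq_cube power2_eq_square)
    also have "\<dots> \<le> t\<^sup>2 * (2 / k * min 1 (\<bar>t\<bar> / cmod z))"
      using abs_div_norm_sub_of_real_le[OF k cone \<open>z \<noteq> 0\<close>] by (intro mult_left_mono) auto
    finally show ?thesis by (simp only: ac_simps)
  qed
  have integrable: "integrable \<mu> (\<lambda>t. t\<^sup>2 * min 1 (\<bar>t\<bar> / cmod z))"
  proof (rule Bochner_Integration.integrable_bound[OF integrable_square])
    show "(\<lambda>t. t\<^sup>2 * min 1 (\<bar>t\<bar> / cmod z)) \<in> borel_measurable \<mu>"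
      by (rule borel_measurable_\<mu>) measurable
    show "AE t in \<mu>. norm (t\<^sup>2 * min 1 (\<bar>t\<bar> / cmod z)) \<le> norm (t\<^sup>2)"
      by (intro AE_I2) (auto simp: abs_mult intro!: mult_left_le)
  qed
  have "cmod (cauchy_moment \<mu> 3 z) \<le> (\<integral>t. cmod (of_real (t ^ 3) / (z - of_real t)) \<partial>\<mu>)"
    unfolding cauchy_moment_def by (rule integral_norm_bound)
  also have "\<dots> \<le> (\<integral>t. 2 / k * (t\<^sup>2 * min 1 (\<bar>t\<bar> / cmod z)) \<partial>\<mu>)"
    using integrable_cauchy_integrand[of 3 z] integrable z bound
    by (intro integral_mono integrable_norm integrable_mult_right) auto
  also have "\<dots> = 2 / k * moment_modulus \<mu> (cmod z)"
    by (simp add: moment_modulus_def)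
  finally show ?thesis .
qed

lemma integrable_cauchy_kernel: "0 < Im z \<Longrightarrow> integrable \<mu> (\<lambda>t. 1 / (z - of_real t))"
  using integrable_cauchy_integrand[of 0 z] by simp

lemma norm_cauchy_transform_quotient_le:
  assumes z: "0 < Im z" and y: "Im z / 2 \<le> Im y" and "y \<noteq> z"
  shows "cmod ((cauchy_transform \<mu> y - cauchy_transform \<mu> z) / (y - z)
      + (\<integral>t. 1 / (z - of_real t)\<^sup>2 \<partial>\<mu>)) \<le> 2 / Im z ^ 3 * cmod (y - z)"
proof -
  have y0: "0 < Im y" using y z by linarith
  have inverse_sq: "(cmod (1 / (z - of_real t)))\<^sup>2 \<le> (1 / Im z)\<^sup>2" for t
    by (intro power_mono norm_inverse_sub_of_real_le z) auto
  then have sq_bound: "cmod (1 / (z - of_real t)\<^sup>2) \<le> (1 / Im z)\<^sup>2" for t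
    by (simp add: norm_divide norm_power power_one_over)
  have integrable_sq: "integrable \<mu> (\<lambda>t. 1 / (z - of_real t)\<^sup>2)"
    by (rule integrable_bounded[OF _ sq_bound]) measurable
  define q where "q t = (y - z) * (1 / (y - of_real t)) * (1 / (z - of_real t))\<^sup>2" for t
  have q_bound: "cmod (q t) \<le> cmod (y - z) * (2 / Im z) * (1 / Im z)\<^sup>2" for t
  proof -
    have "cmod (1 / (y - of_real t)) \<le> 1 / Im y" by (rule norm_inverse_sub_of_real_le[OF y0])
    also have "\<dots> \<le> 2 / Im z" using y z by (simp add: divide_simps)
    finally show ?thesis
      unfolding q_def norm_mult norm_power using z inverse_sq[of t]
      by (intro mult_mono mult_left_mono) (auto simp: power_one_over)
  qed
  have "(cauchy_transform \<mu> y - cauchy_transform \<mu> z) / (y - z) + (\<integral>t. 1 / (z - of_real t)\<^sup>2 \<partial>\<mu>)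
      = (\<integral>t. (1 / (y - of_real t) - 1 / (z - of_real t)) / (y - z) + 1 / (z - of_real t)\<^sup>2 \<partial>\<mu>)"
    using integrable_cauchy_kernel[OF y0] integrable_cauchy_kernel[OF z] integrable_sq
    by (simp add: cauchy_transform_def Bochner_Integration.integral_add
        Bochner_Integration.integral_diff)
  also have "\<dots> = (\<integral>t. q t \<partial>\<mu>)"
  proof (intro Bochner_Integration.integral_cong refl)
    fix t
    define a b where "a = y - of_real t" and "b = z - of_real t"
    have "a \<noteq> 0" "b \<noteq> 0" "a \<noteq> b"
      using y0 z \<open>y \<noteq> z\<close> by (auto simp: a_def b_def complex_eq_iff)
    moreover have "y - z = a - b" by (simp add: a_def b_def)
    ultimately show "(1 / (y - of_real t) - 1 / (z - of_real t)) / (y - z) + 1 / (z - of_real t)\<^sup>2 = q t"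
      unfolding q_def a_def[symmetric] b_def[symmetric] \<open>y - z = a - b\<close>
      by (simp add: field_simps power2_eq_square)
  qed
  also have "cmod \<dots> \<le> cmod (y - z) * (2 / Im z) * (1 / Im z)\<^sup>2"
    using q_bound by (intro norm_integral_le_bound integrable_bounded) (auto simp: q_def)
  also have "\<dots> = 2 / Im z ^ 3 * cmod (y - z)"
    by (simp add: power_one_over power3_eq_cube power2_eq_square ac_simps)
  finally show ?thesis .
qed

lemma cauchy_transform_has_field_derivative:
  assumes z: "0 < Im z"
  shows "(cauchy_transform \<mu> has_field_derivative - (\<integral>t. 1 / (z - of_real t)\<^sup>2 \<partial>\<mu>)) (at z)"
proof -
  define D where "D = - (\<integral>t. 1 / (z - of_real t)\<^sup>2 \<partial>\<mu>)"
  have "\<forall>\<^sub>F y in at z. y \<noteq> z \<and> y \<in> ball z (Im z / 2)"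
    unfolding eventually_at using z by (intro exI[of _ "Im z / 2"]) (auto simp: dist_commute)
  then have "\<forall>\<^sub>F y in at z. cmod ((cauchy_transform \<mu> y - cauchy_transform \<mu> z) / (y - z) - D)
      \<le> 2 / Im z ^ 3 * cmod (y - z)"
  proof eventually_elim
    case (elim y)
    then have "\<bar>Im y - Im z\<bar> < Im z / 2"
      using abs_Im_le_cmod[of "y - z"] by (auto simp: dist_norm norm_minus_commute)
    then have "Im z / 2 \<le> Im y" using abs_ge_minus_self[of "Im y - Im z"] by linarith
    then show ?case
      using norm_cauchy_transform_quotient_le[OF z] elim by (simp add: D_def)
  qed
  moreover have "((\<lambda>y. 2 / Im z ^ 3 * cmod (y - z)) \<longlongrightarrow> 0) (at z)"
    using z by (auto intro!: tendsto_eq_intros)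
  ultimately have "((\<lambda>y. (cauchy_transform \<mu> y - cauchy_transform \<mu> z) / (y - z) - D) \<longlongrightarrow> 0) (at z)"
    by (rule Lim_null_comparison)
  then show ?thesis
    unfolding D_def[symmetric] has_field_derivative_iff by (rule LIM_zero_cancel)
qed

lemma cauchy_transform_holomorphic: "cauchy_transform \<mu> holomorphic_on {z. 0 < Im z}"
  using cauchy_transform_has_field_derivative
  by (subst holomorphic_on_open) (auto simp: open_halfspace_Im_gt)

lemma norm_z_cauchy_transform_ge:
  assumes z: "2 \<le> Im z"
  shows "3 / 4 \<le> cmod (z * cauchy_transform \<mu> z)"
proof -
  have z0: "0 < Im z" "z \<noteq> 0" using z by auto
  have "cmod z \<ge> Im z" using abs_Im_le_cmod[of z] by simp
  then have "cmod (cauchy_moment \<mu> 2 z / z) \<le> (1 / Im z) / Im z"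
    unfolding norm_divide using norm_cauchy_moment_2_le[OF z0(1)] z0 by (intro frac_le) auto
  also have "\<dots> \<le> 1 / 4"
    using z mult_mono[of 2 "Im z" 2 "Im z"] by (simp add: divide_simps)
  finally have "cmod (cauchy_moment \<mu> 2 z / z) \<le> 1 / 4" .
  moreover have "z * cauchy_transform \<mu> z = 1 + cauchy_moment \<mu> 2 z / z"
    using cauchy_transform_expansion[OF z0(1)] z0 by simp
  ultimately show ?thesis
    using norm_diff_ineq[of 1 "cauchy_moment \<mu> 2 z / z"] by simp
qed

lemma F_transform_sub_eq:
  assumes "2 \<le> Im z"
  shows "F_transform \<mu> z - z = - cauchy_moment \<mu> 2 z / (z * cauchy_transform \<mu> z)"
proof -
  have "z \<noteq> 0" "cauchy_transform \<mu> z \<noteq> 0"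
    using assms norm_z_cauchy_transform_ge[OF assms] by auto
  then have "F_transform \<mu> z - z = (1 - z * cauchy_transform \<mu> z) / cauchy_transform \<mu> z"
    by (simp add: F_transform_def field_simps)
  also have "1 - z * cauchy_transform \<mu> z = - (cauchy_moment \<mu> 2 z / z)"
    using cauchy_transform_expansion[of z] assms \<open>z \<noteq> 0\<close> by simp
  finally show ?thesis by simp
qed

lemma norm_F_transform_sub_le:
  assumes z: "2 \<le> Im z"
  shows "cmod (F_transform \<mu> z - z) \<le> 2 / Im z"
proof -
  have "cmod (F_transform \<mu> z - z) \<le> (1 / Im z) / (3 / 4)"
    unfolding F_transform_sub_eq[OF z] norm_divide norm_minus_cancel
    using norm_cauchy_moment_2_le[of z] norm_z_cauchy_transform_ge[OF z] z
    by (intro frac_le) auto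
  also have "\<dots> \<le> 2 / Im z" using z by (simp add: divide_simps)
  finally show ?thesis .
qed

lemma F_transform_holomorphic: "F_transform \<mu> holomorphic_on {z. 2 < Im z}"
proof -
  have "cauchy_transform \<mu> z \<noteq> 0" if "2 < Im z" for z
    using norm_z_cauchy_transform_ge[of z] that by auto
  then have "(\<lambda>z. 1 / cauchy_transform \<mu> z) holomorphic_on {z. 2 < Im z}"
    by (intro holomorphic_intros holomorphic_on_subset[OF cauchy_transform_holomorphic]) auto
  then show ?thesis unfolding F_transform_def[abs_def] .
qed

sublocale F: near_identity "F_transform \<mu>" 2 2
  using F_transform_holomorphic norm_F_transform_sub_le by unfold_locales auto

lemma norm_F_transform_expansion_le:
  assumes z: "2 \<le> Im z"
  shows "cmod (F_transform \<mu> z - z + 1 / z)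
    \<le> 2 * ((1 + cmod (cauchy_moment \<mu> 3 z)) / cmod z ^ 2 + cmod (cauchy_moment \<mu> 3 z)) / cmod z"
proof -
  define C where "C = cauchy_moment \<mu> 3 z"
  have z0: "0 < Im z" "z \<noteq> 0" using z by auto
  have zG: "z * cauchy_transform \<mu> z \<noteq> 0" "3 / 4 \<le> cmod (z * cauchy_transform \<mu> z)"
    using norm_z_cauchy_transform_ge[OF z] by auto
  have C2: "cauchy_moment \<mu> 2 z = (1 + C) / z"
    using cauchy_moment_2_expansion[OF z0(1)] by (simp add: C_def)
  have numerator: "z * cauchy_transform \<mu> z - z * cauchy_moment \<mu> 2 z = (1 + C) / z\<^sup>2 - C"
    using cauchy_transform_expansion[OF z0(1)] z0(2) by (simp add: C2 field_simps power2_eq_square)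
  have "F_transform \<mu> z - z + 1 / z
      = - cauchy_moment \<mu> 2 z / (z * cauchy_transform \<mu> z) + 1 / z"
    by (simp add: F_transform_sub_eq[OF z])
  also have "\<dots> = (z * cauchy_transform \<mu> z - z * cauchy_moment \<mu> 2 z) / (z * (z * cauchy_transform \<mu> z))"
    using z0(2) zG(1) by (simp add: field_simps)
  finally have "cmod (F_transform \<mu> z - z + 1 / z)
      = cmod ((1 + C) / z\<^sup>2 - C) / (cmod z * cmod (z * cauchy_transform \<mu> z))"
    by (simp add: numerator norm_divide norm_mult)
  also have "\<dots> \<le> ((1 + cmod C) / cmod z ^ 2 + cmod C) / (cmod z * (3 / 4))"
  proof (rule frac_le)
    have "cmod ((1 + C) / z\<^sup>2) \<le> (1 + cmod C) / cmod z ^ 2"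
      using norm_triangle_ineq[of 1 C] by (simp add: norm_divide norm_power divide_right_mono)
    then show "cmod ((1 + C) / z\<^sup>2 - C) \<le> (1 + cmod C) / cmod z ^ 2 + cmod C"
      using norm_triangle_ineq4[of "(1 + C) / z\<^sup>2" C] by linarith
    show "cmod z * (3 / 4) \<le> cmod z * cmod (z * cauchy_transform \<mu> z)"
      using zG(2) by (intro mult_left_mono) auto
  qed (use z0 in auto)
  also have "\<dots> \<le> 2 * ((1 + cmod C) / cmod z ^ 2 + cmod C) / cmod z"
    using z0 by (simp add: divide_simps)
  finally show ?thesis by (simp add: C_def)
qed

lemma F_transform_expansion_cone:
  assumes k: "0 < k" and e: "0 < e"
  obtains R where "\<And>z. k * cmod z \<le> Im z \<Longrightarrow> R < cmod z
    \<Longrightarrow> cmod (F_transform \<mu> z - z + 1 / z) \<le> e / cmod z"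
proof -
  define \<eta> where "\<eta> = min (e / 8) 1"
  have \<eta>: "0 < \<eta>" "\<eta> \<le> e / 8" "\<eta> \<le> 1" using e by (auto simp: \<eta>_def)
  have "\<forall>\<^sub>F r in at_top. moment_modulus \<mu> r < k * \<eta> / 2"
    using moment_modulus_tendsto_0 k \<eta> by (intro order_tendstoD(2)) auto
  then obtain r0 where r0: "\<And>r. r0 \<le> r \<Longrightarrow> moment_modulus \<mu> r < k * \<eta> / 2"
    by (auto simp: eventually_at_top_linorder)
  define R where "R = max r0 (max (2 / k) (16 / e + 1))"
  show ?thesis
  proof (rule that[of R])
    fix z assume cone: "k * cmod z \<le> Im z" and big: "R < cmod z"
    have "k * (2 / k) < k * cmod z" using big k by (intro mult_strict_left_mono) (auto simp: R_def)
    then have z: "2 \<le> Im z" using cone k by simp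
    have "cmod (cauchy_moment \<mu> 3 z) \<le> 2 / k * moment_modulus \<mu> (cmod z)"
      using norm_cauchy_moment_3_le[OF k cone] z by simp
    also have "\<dots> \<le> 2 / k * (k * \<eta> / 2)"
      using r0[of "cmod z"] big k by (intro mult_left_mono) (auto simp: R_def)
    finally have C: "cmod (cauchy_moment \<mu> 3 z) \<le> \<eta>" using k by simp
    have "0 < 16 / e" using e by simp
    moreover have "16 / e + 1 < cmod z" using big by (simp add: R_def)
    ultimately have "16 / e < cmod z" "1 \<le> cmod z" by linarith+
    then have "16 / e \<le> cmod z ^ 2"
      using mult_left_mono[of 1 "cmod z" "cmod z"] by (simp add: power2_eq_square)
    then have "2 / cmod z ^ 2 \<le> 2 / (16 / e)"
      using e \<open>1 \<le> cmod z\<close> by (intro divide_left_mono mult_pos_pos) auto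
    moreover have "(1 + cmod (cauchy_moment \<mu> 3 z)) / cmod z ^ 2 \<le> 2 / cmod z ^ 2"
      using C \<eta> by (intro divide_right_mono) auto
    ultimately have "(1 + cmod (cauchy_moment \<mu> 3 z)) / cmod z ^ 2 + cmod (cauchy_moment \<mu> 3 z)
        \<le> e / 4"
      using C \<eta> by (simp only: divide_divide_eq_right)
    then have "2 * ((1 + cmod (cauchy_moment \<mu> 3 z)) / cmod z ^ 2 + cmod (cauchy_moment \<mu> 3 z))
        / cmod z \<le> 2 * (e / 4) / cmod z"
      by (intro divide_right_mono mult_left_mono) auto
    also have "\<dots> \<le> e / cmod z" using e by (intro divide_right_mono) auto
    finally show "cmod (F_transform \<mu> z - z + 1 / z) \<le> e / cmod z"
      using norm_F_transform_expansion_le[OF z] by linarith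
  qed
qed

section \<open>The Voiculescu transform of a standardized measure and of its free powers\<close>

text \<open>For \<open>F\<close> we have \<open>c = M = 2\<close>, so \<open>F\<close> is injective on \<open>Im z > 16\<close> and
  \<open>F.local_inverse\<close> is defined on \<open>Im w > 17\<close>.\<close>
lemma near_identity_F_inverse: "near_identity F.local_inverse 17 4"
  using F.near_identity_local_inverse by simp

lemma right_inverse_branch_F_inverse: "right_inverse_branch \<mu> {v. 17 < Im v} F.local_inverse"
  unfolding right_inverse_branch_def
proof (intro conjI ballI)
  show "admissible_dom {v. 17 < Im v}"
    by (auto simp: admissible_dom_def upper_half_def open_halfspace_Im_gt convex_halfspace_Im_gt
        intro!: exI[of _ 18])
  show "F.local_inverse holomorphic_on {v. 17 < Im v}"
    using F.local_inverse_holomorphic by simp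
  show "F.local_inverse ` {v. 17 < Im v} \<subseteq> upper_half"
    using F.local_inverse(3) by (force simp: upper_half_def)
  show "F_transform \<mu> (F.local_inverse w) = w" if "w \<in> {v. 17 < Im v}" for w
    using F.local_inverse(1) that by simp
  show "((\<lambda>y. F.local_inverse (\<i> * of_real y) / (\<i> * of_real y)) \<longlongrightarrow> 1) at_top"
  proof (rule Lim_null_comparison[where g = "\<lambda>y. 1 / y", THEN LIM_zero_cancel])
    show "\<forall>\<^sub>F y in at_top. cmod (F.local_inverse (\<i> * of_real y) / (\<i> * of_real y) - 1) \<le> 1 / y"
      unfolding eventually_at_top_linorder
    proof (intro exI[of _ 18] allI impI)
      fix y :: real assume y: "18 \<le> y"
      have "F.local_inverse (\<i> * of_real y) / (\<i> * of_real y) - 1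
          = (F.local_inverse (\<i> * of_real y) - \<i> * of_real y) / (\<i> * of_real y)"
        using y by (simp add: field_simps)
      also have "cmod \<dots> \<le> 1 / y"
        using F.local_inverse(2)[of "\<i> * of_real y"] y
        by (simp add: norm_divide norm_mult divide_right_mono)
      finally show "cmod (F.local_inverse (\<i> * of_real y) / (\<i> * of_real y) - 1) \<le> 1 / y" .
    qed
    show "((\<lambda>y::real. 1 / y) \<longlongrightarrow> 0) at_top" by real_asymp
  qed
qed

lemma half_plane_subset_phi_dom: "{w. 17 < Im w} \<subseteq> phi_dom \<mu>"
  using right_inverse_branch_F_inverse unfolding phi_dom_def by blast

lemma voiculescu_eq_F_inverse:
  assumes "17 < Im w"
  shows "voiculescu \<mu> w = F.local_inverse w - w"
proof (rule voiculescu_eq_near_identity[where c = 17 and M = 4 and a = 1 and b = 36])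
  show "w \<in> phi_dom \<mu>" using assms half_plane_subset_phi_dom by blast
  show "near_identity (\<lambda>w. w + (F.local_inverse w - w)) 17 4"
    using near_identity_F_inverse by simp
  fix \<zeta> assume "\<zeta> \<in> trunc_cone 1 36"
  then have "17 < Im \<zeta>" using trunc_cone_Im_gt[of \<zeta> 1 36] by simp
  then show "F_transform \<mu> (\<zeta> + (F.local_inverse \<zeta> - \<zeta>)) = \<zeta>"
    using F.local_inverse(1) by simp
qed (use assms in auto)

lemma near_identity_voiculescu: "near_identity (\<lambda>w. w + voiculescu \<mu> w) 17 4"
  using near_identity_F_inverse by (rule near_identity_cong) (simp add: voiculescu_eq_F_inverse)

text \<open>With \<open>\<zeta> = F\<^sup>-\<^sup>1 w\<close> one has
  \<open>\<phi> w - 1/w = (1/\<zeta> - 1/w) - (F \<zeta> - \<zeta> + 1/\<zeta>)\<close>, and \<open>\<zeta>\<close> stays in a slightly wider cone.\<close>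
lemma voiculescu_asymptotic:
  assumes a: "0 < a" and e: "0 < e"
  obtains R where "\<And>w. a * \<bar>Re w\<bar> < Im w \<Longrightarrow> R < cmod w
    \<Longrightarrow> cmod (voiculescu \<mu> w - 1 / w) \<le> e / cmod w"
proof -
  define k where "k = a / (1 + a)"
  have k: "0 < k" "k \<le> 1" using a by (auto simp: k_def)
  obtain R1 where R1: "\<And>z. k / 2 * cmod z \<le> Im z \<Longrightarrow> R1 < cmod z
      \<Longrightarrow> cmod (F_transform \<mu> z - z + 1 / z) \<le> e / 4 / cmod z"
    using F_transform_expansion_cone[of "k / 2" "e / 4"] k e by auto
  define R where "R = 17 / k + 2 / k + \<bar>R1\<bar> + 8 / e + 3"
  have R: "17 / k + 2 / k + 3 \<le> R" "\<bar>R1\<bar> + 3 \<le> R" "8 / e \<le> R" "3 \<le> R"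
    using k e by (auto simp: R_def)
  show ?thesis
  proof (rule that[of R])
    fix w assume cone: "a * \<bar>Re w\<bar> < Im w" and big: "R < cmod w"
    have w_cone: "k * cmod w \<le> Im w" using cone_Im_ge_norm[OF a cone] by (simp add: k_def)
    have "k * (17 / k + 2 / k) \<le> k * cmod w" using R(1) big k by (intro mult_left_mono) auto
    then have kw: "19 \<le> k * cmod w" using k by (simp add: algebra_simps)
    then have w: "17 < Im w" using w_cone by linarith
    define \<zeta> where "\<zeta> = F.local_inverse w"
    have F_\<zeta>: "F_transform \<mu> \<zeta> = w" and close: "cmod (\<zeta> - w) \<le> 1"
      using F.local_inverse(1,2)[of w] w by (auto simp: \<zeta>_def)
    have norm_\<zeta>: "cmod w - 1 \<le> cmod \<zeta>" "cmod \<zeta> \<le> cmod w + 1"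
      using close norm_triangle_ineq2[of \<zeta> w] norm_triangle_ineq3[of \<zeta> w]
      by (auto simp: norm_minus_commute)
    have "k * cmod w - 1 \<le> Im \<zeta>"
      using close abs_Im_le_cmod[of "\<zeta> - w"] w_cone by simp
    moreover have "k / 2 * (cmod w + 1) \<le> k * cmod w - 1"
      using kw k by (simp add: field_simps)
    moreover have "k / 2 * cmod \<zeta> \<le> k / 2 * (cmod w + 1)"
      using norm_\<zeta> k by (intro mult_left_mono) auto
    ultimately have \<zeta>_cone: "k / 2 * cmod \<zeta> \<le> Im \<zeta>" by linarith
    have w_pos: "cmod w / 2 \<le> cmod \<zeta>" "0 < cmod \<zeta>" "0 < cmod w"
      using norm_\<zeta> big R by auto
    have "cmod (F_transform \<mu> \<zeta> - \<zeta> + 1 / \<zeta>) \<le> e / 4 / cmod \<zeta>"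
      using R1[OF \<zeta>_cone] norm_\<zeta> big R by auto
    also have "\<dots> \<le> e / 4 / (cmod w / 2)"
      using w_pos e by (intro divide_left_mono) auto
    finally have expansion: "cmod (F_transform \<mu> \<zeta> - \<zeta> + 1 / \<zeta>) \<le> e / 2 / cmod w" by simp
    have "cmod (1 / \<zeta> - 1 / w) = cmod (w - \<zeta>) / (cmod \<zeta> * cmod w)"
      using w_pos by (simp add: field_simps norm_divide norm_mult)
    also have "\<dots> \<le> 1 / (cmod w / 2 * cmod w)"
      using close w_pos by (intro frac_le mult_right_mono) (auto simp: norm_minus_commute)
    also have "\<dots> = 2 / cmod w / cmod w" by simp
    also have "\<dots> \<le> e / 2 / cmod w"
    proof (intro divide_right_mono)
      have "8 / e < cmod w" using big R(3) by linarith
      then show "2 / cmod w \<le> e / 2" using e w_pos by (simp add: field_simps)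
    qed simp
    finally have inverses: "cmod (1 / \<zeta> - 1 / w) \<le> e / 2 / cmod w" .
    have split: "voiculescu \<mu> w - 1 / w = (1 / \<zeta> - 1 / w) - (F_transform \<mu> \<zeta> - \<zeta> + 1 / \<zeta>)"
      using voiculescu_eq_F_inverse[OF w] F_\<zeta> by (simp add: \<zeta>_def)
    have "cmod (voiculescu \<mu> w - 1 / w)
        \<le> cmod (1 / \<zeta> - 1 / w) + cmod (F_transform \<mu> \<zeta> - \<zeta> + 1 / \<zeta>)"
      unfolding split by (rule norm_triangle_ineq4)
    also have "\<dots> \<le> e / cmod w" using inverses expansion by (simp add: field_simps)
    finally show "cmod (voiculescu \<mu> w - 1 / w) \<le> e / cmod w" .
  qed
qed

lemma voiculescu_normalized_power:
  assumes P: "free_powers \<mu> P" and n: "1 \<le> n"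
    and z: "z \<in> phi_dom (normalized_power P n)" and Im_z: "17 < Im (of_real (sqrt n) * z)"
  shows "voiculescu (normalized_power P n) z
    = of_real (sqrt n) * voiculescu \<mu> (of_real (sqrt n) * z)"
proof -
  define s where "s = sqrt (real n)"
  have s: "1 \<le> s" "of_real s * of_real s = (of_nat n :: complex)"
    using n by (simp_all add: s_def flip: of_real_mult)
  have cone_dom: "trunc_cone 1 36 \<subseteq> phi_dom \<mu>"
    using trunc_cone_Im_gt[of _ 1 36] half_plane_subset_phi_dom by force
  have "\<exists>a b. 0 < a \<and> 0 < b \<and> trunc_cone a b \<subseteq> phi_dom (P n)
      \<and> (\<forall>w\<in>trunc_cone a b. voiculescu (P n) w = of_nat n * voiculescu \<mu> w)"
    by (rule free_powers_voiculescu[OF P _ _ cone_dom n]) simp_all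
  then obtain a b where ab: "0 < a" "0 < b" "trunc_cone a b \<subseteq> phi_dom (P n)"
    "\<And>w. w \<in> trunc_cone a b \<Longrightarrow> voiculescu (P n) w = of_nat n * voiculescu \<mu> w"
    by blast
  have sets_P: "sets (P n) = sets borel" by (rule free_powers_sets[OF P sets_\<mu> n])
  show ?thesis
    unfolding s_def[symmetric]
  proof (rule voiculescu_eq_near_identity[OF z _ ab(1,2)])
    show "near_identity (\<lambda>\<zeta>. \<zeta> + of_real s * voiculescu \<mu> (of_real s * \<zeta>)) (17 / s) 4"
      using near_identity_rescale[OF near_identity_voiculescu] s by simp
    show "17 / s < Im z" using Im_z s by (simp add: s_def field_simps)
    fix \<zeta> assume "\<zeta> \<in> trunc_cone a b"
    then have w: "of_real s * \<zeta> \<in> trunc_cone a b" using trunc_cone_scale ab s by auto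
    have "of_real s * (\<zeta> + of_real s * voiculescu \<mu> (of_real s * \<zeta>))
        = of_real s * \<zeta> + voiculescu (P n) (of_real s * \<zeta>)"
      using ab(4)[OF w] s(2) by (simp add: algebra_simps)
    then show "F_transform (normalized_power P n) (\<zeta> + of_real s * voiculescu \<mu> (of_real s * \<zeta>)) = \<zeta>"
      using F_transform_distr_divide[OF sets_P, of s] F_transform_add_voiculescu[of "of_real s * \<zeta>"]
        w ab(3) s by (auto simp: normalized_power_def s_def)
  qed
qed

lemma scaled_voiculescu_uniform:
  assumes \<alpha>: "0 < \<alpha>" and \<beta>: "0 < \<beta>" and r: "0 < r"
  shows "\<forall>\<^sub>F n in sequentially. \<forall>z\<in>trunc_cone \<alpha> \<beta>.
    cmod (of_real (sqrt n) * voiculescu \<mu> (of_real (sqrt n) * z) - 1 / z) \<le> r"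
proof -
  obtain R where R: "\<And>w. \<alpha> * \<bar>Re w\<bar> < Im w \<Longrightarrow> R < cmod w
      \<Longrightarrow> cmod (voiculescu \<mu> w - 1 / w) \<le> r * \<beta> / cmod w"
    using voiculescu_asymptotic[OF \<alpha>, of "r * \<beta>"] r \<beta> by auto
  have "\<forall>\<^sub>F n in sequentially. max 1 (R / \<beta>) < sqrt (real n)" by (rule eventually_sqrt_gt)
  then show ?thesis
  proof eventually_elim
    case (elim n)
    define s where "s = sqrt (real n)"
    have s: "1 < s" "R / \<beta> < s" using elim by (auto simp: s_def)
    show ?case unfolding s_def[symmetric]
    proof
      fix z assume "z \<in> trunc_cone \<alpha> \<beta>"
      then have z: "\<alpha> * \<bar>Re z\<bar> < Im z" "\<beta> < cmod z" by (auto simp: trunc_cone_def)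
      define w where "w = of_real s * z"
      have "\<alpha> * \<bar>Re w\<bar> < Im w" using z s by (simp add: w_def abs_mult)
      moreover have "R < cmod w"
      proof -
        have "R < s * \<beta>" using s \<beta> by (simp add: field_simps)
        also have "\<dots> \<le> s * cmod z" using z s by (intro mult_left_mono) auto
        finally show ?thesis using s by (simp add: w_def norm_mult)
      qed
      ultimately have "cmod (voiculescu \<mu> w - 1 / w) \<le> r * \<beta> / cmod w" by (rule R)
      moreover have "of_real s * voiculescu \<mu> w - 1 / z = of_real s * (voiculescu \<mu> w - 1 / w)"
        using s z \<beta> by (auto simp: w_def field_simps)
      ultimately have "cmod (of_real s * voiculescu \<mu> w - 1 / z) \<le> s * (r * \<beta> / cmod w)"
        using s by (simp add: norm_mult mult_left_mono del: times_divide_eq_right)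
      also have "\<dots> = r * \<beta> / cmod z" using s z \<beta> by (simp add: w_def norm_mult)
      also have "\<dots> \<le> r * \<beta> / \<beta>" using z r \<beta> by (intro divide_left_mono mult_pos_pos) auto
      finally show "cmod (of_real s * voiculescu \<mu> (of_real s * z) - 1 / z) \<le> r"
        using \<beta> by (simp add: w_def)
    qed
  qed
qed

lemma scaled_voiculescu_eq_eventually:
  assumes P: "free_powers \<mu> P" and "0 < \<alpha>" "0 < \<beta>"
  shows "\<forall>\<^sub>F n in sequentially. \<forall>z\<in>trunc_cone \<alpha> \<beta>.
    of_real (sqrt (real n)) * z \<in> phi_dom \<mu> \<and>
    (z \<in> phi_dom (normalized_power P n) \<longrightarrow>
       of_real (sqrt (real n)) * voiculescu \<mu> (of_real (sqrt (real n)) * z)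
         = voiculescu (normalized_power P n) z)"
proof -
  define m where "m = \<beta> * \<alpha> / (1 + \<alpha>)"
  have m: "0 < m" and Im_gt: "\<And>z. z \<in> trunc_cone \<alpha> \<beta> \<Longrightarrow> m < Im z"
    using assms trunc_cone_Im_gt by (auto simp: m_def)
  have "\<forall>\<^sub>F n in sequentially. max 1 (17 / m) < sqrt (real n)" by (rule eventually_sqrt_gt)
  then show ?thesis
  proof eventually_elim
    case (elim n)
    have "17 < sqrt n * Im z" if "z \<in> trunc_cone \<alpha> \<beta>" for z
      using elim m mult_strict_mono[of "17 / m" "sqrt n" m "Im z"] Im_gt[OF that] by simp
    moreover have "1 \<le> n" using elim by (cases n) auto
    ultimately show ?case
      using half_plane_subset_phi_dom voiculescu_normalized_power[OF P] by auto
  qed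
qed

end

theorem mainTheorem2:
  fixes \<mu> :: "real measure" and P :: "nat \<Rightarrow> real measure" and \<alpha> \<beta> :: real
  assumes "prob_space \<mu>" and "sets \<mu> = sets borel"
    and "integrable \<mu> (\<lambda>x. x ^ 2)"
    and "(\<integral>x. x \<partial>\<mu>) = 0"
    and "(\<integral>x. x ^ 2 \<partial>\<mu>) = 1"
    and "free_powers \<mu> P"
    and "\<alpha> > 0" and "\<beta> > 0"
  shows "(\<exists>N. \<forall>n\<ge>N.
      (\<forall>z\<in>trunc_cone \<alpha> \<beta>. complex_of_real (sqrt (real n)) * z \<in> phi_dom \<mu>) \<and>
      (\<forall>z\<in>trunc_cone \<alpha> \<beta>. z \<in> phi_dom (normalized_power P n) \<longrightarrow>
         complex_of_real (sqrt (real n)) * voiculescu \<mu> (complex_of_real (sqrt (real n)) * z)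
           = voiculescu (normalized_power P n) z)) \<and>
    ((\<lambda>n. SUP z\<in>trunc_cone \<alpha> \<beta>.
            ereal (cmod (complex_of_real (sqrt (real n)) *
               voiculescu \<mu> (complex_of_real (sqrt (real n)) * z) - 1 / z)))
         \<longlonglongrightarrow> 0)"
proof -
  interpret standardized_measure \<mu>
    using assms(1-5) unfolding standardized_measure_def by blast
  have "\<exists>N. \<forall>n\<ge>N.
      (\<forall>z\<in>trunc_cone \<alpha> \<beta>. complex_of_real (sqrt (real n)) * z \<in> phi_dom \<mu>) \<and>
      (\<forall>z\<in>trunc_cone \<alpha> \<beta>. z \<in> phi_dom (normalized_power P n) \<longrightarrow>
         complex_of_real (sqrt (real n)) * voiculescu \<mu> (complex_of_real (sqrt (real n)) * z)
           = voiculescu (normalized_power P n) z)"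
    using scaled_voiculescu_eq_eventually[OF assms(6-8)] by (auto simp: eventually_sequentially)
  moreover have "trunc_cone \<alpha> \<beta> \<noteq> {}"
    using assms(8) by (auto simp: trunc_cone_def norm_mult intro!: exI[of _ "\<i> * of_real (\<beta> + 1)"])
  then have "(\<lambda>n. SUP z\<in>trunc_cone \<alpha> \<beta>.
            ereal (cmod (complex_of_real (sqrt (real n)) *
               voiculescu \<mu> (complex_of_real (sqrt (real n)) * z) - 1 / z))) \<longlonglongrightarrow> 0"
    by (rule tendsto_SUP_ereal_0) (auto intro: scaled_voiculescu_uniform[OF assms(7,8)])
  ultimately show ?thesis by blast
qed

end
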